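(* Let $(\mathbf{H},m,\Delta)$ be a commutative and cocommutative (connected) set Hopf monoid, with each $\mathbf{H}[I]$ equipped with the reassembly partial order $\le_r$ (so that $\mathbf{H}$ is a self-adjoint poset Hopf monoid). Let $I=S\sqcup T$, $x\in\mathbf{H}[S]$ and $y\in\mathbf{H}[T]$. Then $\omega_x\cdot\omega_y=\omega_{x\cdot y}$ in $\mathbf{k}\mathbf{H}[I]$, where $x\cdot y=m_{S,T}(x,y)$ and, for $z\in\mathbf{H}[J]$, $\omega_z=\sum_{z\le_r w}\mu(z,w)\,w$ with $\mu$ the Möbius function of $(\mathbf{H}[J],\le_r)$.
   Context: $\mathbf{k}$ is a field of characteristic $0$. A (connected) set species $\mathbf{H}$ assigns to each finite set $I$ a finite set $\mathbf{H}[I]$, $\mathbf{H}[\emptyset]=\{1\}$, and bijections functorially to bijections. A set Hopf monoid has maps $m_{S,T}:\mathbf{H}[S]\times\mathbf{H}[T]\to\mathbf{H}[S\sqcup T]$ (natural, associative, unital) and $\Delta_{S,T}:\mathbf{H}[S\sqcup T]\to\mathbf{H}[S]\times\mathbf{H}[T]$ (natural, coassociative, counital), satisfying compatibility: for $I=S_1\sqcup S_2=T_1\sqcup T_2$, $A=S_1\cap T_1$, $B=S_1\cap T_2$, $C=S_2\cap T_1$, $D=S_2\cap T_2$, if $\Delta_{A,B}(x)=(x_A,x_B)$, $\Delta_{C,D}(y)=(y_C,y_D)$ then $\Delta_{T_1,T_2}(m_{S_1,S_2}(x,y))=(m_{A,C}(x_A,y_C),m_{B,D}(x_B,y_D))$.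 Commutative: $m_{S,T}(x,y)=m_{T,S}(y,x)$; cocommutative: $\Delta_{S,T}(x)=(y,z)\iff\Delta_{T,S}(x)=(z,y)$. Reassembly order: $x\le_r y$ in $\mathbf{H}[I]$ iff $y=m_{S_1,\dots,S_k}\circ\Delta_{S_1,\dots,S_k}(x)$ for some set partition $S_1\sqcup\dots\sqcup S_k=I$ (iterated maps via (co)associativity); for commutative cocommutative $\mathbf{H}$ this is a partial order. $\mathbf{k}\mathbf{H}[I]$ is the vector space with basis $\mathbf{H}[I]$, multiplication extended bilinearly. *)

theory Defs
  imports Main "HOL-Library.Disjoint_Sets"
begin

text \<open>A set species with labels of type 'l and structures of type 'e:
  H I is the set of H-structures on the finite set I; rl s I is the transport
  of structures along the bijection s restricted to I (from I onto s ` I).\<close>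

definition set_species :: "('l set \<Rightarrow> 'e set) \<Rightarrow> (('l \<Rightarrow> 'l) \<Rightarrow> 'l set \<Rightarrow> 'e \<Rightarrow> 'e) \<Rightarrow> bool" where
  "set_species H rl \<longleftrightarrow>
     (\<forall>I. finite I \<longrightarrow> finite (H I)) \<and>
     (\<exists>e. H {} = {e}) \<and>
     (\<forall>s I x. finite I \<and> inj_on s I \<and> x \<in> H I \<longrightarrow> rl s I x \<in> H (s ` I)) \<and>
     (\<forall>s t I x. finite I \<and> (\<forall>i\<in>I. s i = t i) \<and> x \<in> H I \<longrightarrow> rl s I x = rl t I x) \<and>
     (\<forall>I x. finite I \<and> x \<in> H I \<longrightarrow> rl id I x = x) \<and>
     (\<forall>s t I x. finite I \<and> inj_on s I \<and> inj_on t (s ` I) \<and> x \<in> H I \<longrightarrow>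
         rl t (s ` I) (rl s I x) = rl (t \<circ> s) I x)"

definition unit_elem :: "('l set \<Rightarrow> 'e set) \<Rightarrow> 'e" where
  "unit_elem H = the_elem (H {})"

definition set_hopf_monoid ::
  "('l set \<Rightarrow> 'e set) \<Rightarrow> (('l \<Rightarrow> 'l) \<Rightarrow> 'l set \<Rightarrow> 'e \<Rightarrow> 'e)
   \<Rightarrow> ('l set \<Rightarrow> 'l set \<Rightarrow> 'e \<Rightarrow> 'e \<Rightarrow> 'e) \<Rightarrow> ('l set \<Rightarrow> 'l set \<Rightarrow> 'e \<Rightarrow> 'e \<times> 'e) \<Rightarrow> bool" where
  "set_hopf_monoid H rl m D \<longleftrightarrow>
     set_species H rl \<and>
     \<comment> \<open>well-definedness of m and D\<close>
     (\<forall>S T x y. finite S \<and> finite T \<and> S \<inter> T = {} \<and> x \<in> H S \<and> y \<in> H T \<longrightarrow>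
        m S T x y \<in> H (S \<union> T)) \<and>
     (\<forall>S T x. finite S \<and> finite T \<and> S \<inter> T = {} \<and> x \<in> H (S \<union> T) \<longrightarrow>
        fst (D S T x) \<in> H S \<and> snd (D S T x) \<in> H T) \<and>
     \<comment> \<open>naturality\<close>
     (\<forall>s S T x y. finite S \<and> finite T \<and> S \<inter> T = {} \<and> inj_on s (S \<union> T) \<and> x \<in> H S \<and> y \<in> H T \<longrightarrow>
        rl s (S \<union> T) (m S T x y) = m (s ` S) (s ` T) (rl s S x) (rl s T y)) \<and>
     (\<forall>s S T x. finite S \<and> finite T \<and> S \<inter> T = {} \<and> inj_on s (S \<union> T) \<and> x \<in> H (S \<union> T) \<longrightarrow>
        D (s ` S) (s ` T) (rl s (S \<union> T) x) = (rl s S (fst (D S T x)), rl s T (snd (D S T x)))) \<and>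
     \<comment> \<open>unitality and counitality\<close>
     (\<forall>I x. finite I \<and> x \<in> H I \<longrightarrow>
        m {} I (unit_elem H) x = x \<and> m I {} x (unit_elem H) = x) \<and>
     (\<forall>I x. finite I \<and> x \<in> H I \<longrightarrow>
        D {} I x = (unit_elem H, x) \<and> D I {} x = (x, unit_elem H)) \<and>
     \<comment> \<open>associativity\<close>
     (\<forall>R S T x y z. finite R \<and> finite S \<and> finite T \<and> R \<inter> S = {} \<and> R \<inter> T = {} \<and> S \<inter> T = {}
        \<and> x \<in> H R \<and> y \<in> H S \<and> z \<in> H T \<longrightarrow>
        m (R \<union> S) T (m R S x y) z = m R (S \<union> T) x (m S T y z)) \<and>
     \<comment> \<open>coassociativity\<close>
     (\<forall>R S T x. finite R \<and> finite S \<and> finite T \<and> R \<inter> S = {} \<and> R \<inter> T = {} \<and> S \<inter> T = {}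
        \<and> x \<in> H (R \<union> S \<union> T) \<longrightarrow>
        (let (a, w) = D (R \<union> S) T x; (u, v) = D R S a in (u, v, w)) =
        (let (u, b) = D R (S \<union> T) x; (v, w) = D S T b in (u, v, w))) \<and>
     \<comment> \<open>compatibility\<close>
     (\<forall>S1 S2 T1 T2 x y. finite S1 \<and> finite S2 \<and> finite T1 \<and> finite T2 \<and>
        S1 \<inter> S2 = {} \<and> T1 \<inter> T2 = {} \<and> S1 \<union> S2 = T1 \<union> T2 \<and> x \<in> H S1 \<and> y \<in> H S2 \<longrightarrow>
        (let A = S1 \<inter> T1; B = S1 \<inter> T2; C = S2 \<inter> T1; E = S2 \<inter> T2 in
          D T1 T2 (m S1 S2 x y) =
            (m A C (fst (D A B x)) (fst (D C E y)), m B E (snd (D A B x)) (snd (D C E y)))))"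

definition commutative_shm :: "('l set \<Rightarrow> 'e set) \<Rightarrow> ('l set \<Rightarrow> 'l set \<Rightarrow> 'e \<Rightarrow> 'e \<Rightarrow> 'e) \<Rightarrow> bool" where
  "commutative_shm H m \<longleftrightarrow>
     (\<forall>S T x y. finite S \<and> finite T \<and> S \<inter> T = {} \<and> x \<in> H S \<and> y \<in> H T \<longrightarrow> m S T x y = m T S y x)"

definition cocommutative_shm :: "('l set \<Rightarrow> 'e set) \<Rightarrow> ('l set \<Rightarrow> 'l set \<Rightarrow> 'e \<Rightarrow> 'e \<times> 'e) \<Rightarrow> bool" where
  "cocommutative_shm H D \<longleftrightarrow>
     (\<forall>S T x. finite S \<and> finite T \<and> S \<inter> T = {} \<and> x \<in> H (S \<union> T) \<longrightarrow> D T S x = prod.swap (D S T x))"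

fun mult_it :: "('l set \<Rightarrow> 'l set \<Rightarrow> 'e \<Rightarrow> 'e \<Rightarrow> 'e) \<Rightarrow> 'e \<Rightarrow> 'l set list \<Rightarrow> 'e list \<Rightarrow> 'e" where
  "mult_it m e [] xs = e"
| "mult_it m e (S # Ss) xs = m S (\<Union>(set Ss)) (hd xs) (mult_it m e Ss (tl xs))"

fun comult_it :: "('l set \<Rightarrow> 'l set \<Rightarrow> 'e \<Rightarrow> 'e \<times> 'e) \<Rightarrow> 'l set list \<Rightarrow> 'e \<Rightarrow> 'e list" where
  "comult_it D [] x = []"
| "comult_it D (S # Ss) x = fst (D S (\<Union>(set Ss)) x) # comult_it D Ss (snd (D S (\<Union>(set Ss)) x))"

definition reassembly_le ::
  "('l set \<Rightarrow> 'e set) \<Rightarrow> ('l set \<Rightarrow> 'l set \<Rightarrow> 'e \<Rightarrow> 'e \<Rightarrow> 'e) \<Rightarrow> ('l set \<Rightarrow> 'l set \<Rightarrow> 'e \<Rightarrow> 'e \<times> 'e)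
   \<Rightarrow> 'l set \<Rightarrow> 'e \<Rightarrow> 'e \<Rightarrow> bool" where
  "reassembly_le H m D I x y \<longleftrightarrow> x \<in> H I \<and>
     (\<exists>Ss. distinct Ss \<and> partition_on I (set Ss) \<and>
        y = mult_it m (unit_elem H) Ss (comult_it D Ss x))"

definition moebius :: "('a \<Rightarrow> 'a \<Rightarrow> bool) \<Rightarrow> 'a set \<Rightarrow> 'a \<Rightarrow> 'a \<Rightarrow> int" where
  "moebius le A = (THE f.
     (\<forall>x y. f x y \<noteq> 0 \<longrightarrow> x \<in> A \<and> y \<in> A \<and> le x y) \<and>
     (\<forall>x\<in>A. \<forall>y\<in>A. le x y \<longrightarrow>
        (\<Sum>z\<in>{z\<in>A. le x z \<and> le z y}. f x z) = (if x = y then 1 else 0)))"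

text \<open>Elements of kH[I] are coefficient functions supported on H[I].\<close>
definition kmult :: "('l set \<Rightarrow> 'e set) \<Rightarrow> ('l set \<Rightarrow> 'l set \<Rightarrow> 'e \<Rightarrow> 'e \<Rightarrow> 'e)
   \<Rightarrow> 'l set \<Rightarrow> 'l set \<Rightarrow> ('e \<Rightarrow> 'k::field) \<Rightarrow> ('e \<Rightarrow> 'k) \<Rightarrow> ('e \<Rightarrow> 'k)" where
  "kmult H m S T f g = (\<lambda>w. \<Sum>(a, b)\<in>H S \<times> H T. if m S T a b = w then f a * g b else 0)"

definition omega :: "('l set \<Rightarrow> 'e set) \<Rightarrow> ('l set \<Rightarrow> 'l set \<Rightarrow> 'e \<Rightarrow> 'e \<Rightarrow> 'e)
   \<Rightarrow> ('l set \<Rightarrow> 'l set \<Rightarrow> 'e \<Rightarrow> 'e \<times> 'e) \<Rightarrow> 'l set \<Rightarrow> 'e \<Rightarrow> ('e \<Rightarrow> 'k::field)" where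
  "omega H m D J z = (\<lambda>w. if w \<in> H J \<and> reassembly_le H m D J z w
       then of_int (moebius (reassembly_le H m D J) (H J) z w) else 0)"

end

theory Submission
  imports Defs
begin

text \<open>Reassembling x \<cdot> y along a set composition of S \<union> T gives, by the compatibility
  axiom, the product of the reassemblies of x and of y along the induced compositions of S and
  of T; and m S T is injective because D S T undoes it. Hence w \<mapsto> (a, b) with w = a \<cdot> b is an
  order isomorphism from the reassemblies of x \<cdot> y onto pairs (reassembly of x, reassembly of y),
  so the Moebius function above x \<cdot> y is the product of the Moebius functions above x and above y,
  which is the coefficientwise form of \<omega>(x) \<cdot> \<omega>(y) = \<omega>(x \<cdot> y).\<close>

section \<open>Moebius functions of finite posets\<close>

locale finite_poset =
  fixes le :: "'a \<Rightarrow> 'a \<Rightarrow> bool" and A :: "'a set"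
  assumes finite_carrier: "finite A"
    and le_in_carrier: "le x y \<Longrightarrow> x \<in> A \<and> y \<in> A"
    and reflexive: "x \<in> A \<Longrightarrow> le x x"
    and transitive: "le x y \<Longrightarrow> le y z \<Longrightarrow> le x z"
    and antisymmetric: "le x y \<Longrightarrow> le y x \<Longrightarrow> x = y"
begin

definition interval :: "'a \<Rightarrow> 'a \<Rightarrow> 'a set" where
  "interval x y = {z \<in> A. le x z \<and> le z y}"

lemma finite_interval: "finite (interval x y)"
  using finite_carrier by (simp add: interval_def)

lemma right_mem_interval: "le x y \<Longrightarrow> y \<in> interval x y"
  using le_in_carrier reflexive by (auto simp: interval_def)

lemma interval_refl: "x \<in> A \<Longrightarrow> interval x x = {x}"
  using antisymmetric reflexive by (auto simp: interval_def)

lemma card_interval_less: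
  assumes "z \<in> interval x y - {y}"
  shows "card (interval x z) < card (interval x y)"
proof (rule psubset_card_mono[OF finite_interval])
  have z: "le x z" "le z y" "z \<noteq> y"
    using assms by (auto simp: interval_def)
  have "y \<in> interval x y"
    using right_mem_interval[OF transitive[OF z(1,2)]] .
  moreover have "y \<notin> interval x z"
    using z antisymmetric[of y z] by (auto simp: interval_def)
  moreover have "interval x z \<subseteq> interval x y"
    using z(2) transitive[of _ z y] by (auto simp: interval_def)
  ultimately show "interval x z \<subset> interval x y"
    by blast
qed

lemma eq_if_interval_sums_eq:
  fixes f g :: "'a \<Rightarrow> 'b::ab_group_add"
  assumes sums: "\<And>w. le x w \<Longrightarrow> (\<Sum>z\<in>interval x w. f z) = (\<Sum>z\<in>interval x w. g z)"
    and "le x w"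
  shows "f w = g w"
  using \<open>le x w\<close>
proof (induction "card (interval x w)" arbitrary: w rule: less_induct)
  case less
  have "f z = g z" if "z \<in> interval x w - {w}" for z
    using that less.hyps[OF card_interval_less] by (auto simp: interval_def)
  then have below: "(\<Sum>z\<in>interval x w - {w}. f z) = (\<Sum>z\<in>interval x w - {w}. g z)"
    by (rule sum.cong[OF refl])
  have w: "w \<in> interval x w"
    using right_mem_interval[OF less.prems] .
  show ?case
    using sums[OF less.prems] below
    by (simp add: sum.remove[OF finite_interval w])
qed

text \<open>The defining recursion of the Moebius function, cut off by a fuel parameter; it serves only
  to show that the function characterised in \<^const>\<open>moebius\<close> exists.\<close>
fun moebius_fuel :: "nat \<Rightarrow> 'a \<Rightarrow> 'a \<Rightarrow> int" where
  "moebius_fuel 0 x y = 0"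
| "moebius_fuel (Suc n) x y =
     (if \<not> le x y then 0 else if x = y then 1
      else - (\<Sum>z\<in>interval x y - {y}. moebius_fuel n x z))"

lemma moebius_fuel_stable:
  assumes "card (interval x y) \<le> n" "card (interval x y) \<le> n'"
  shows "moebius_fuel n x y = moebius_fuel n' x y"
  using assms
proof (induction "card (interval x y)" arbitrary: y n n' rule: less_induct)
  case less
  show ?case
  proof (cases "le x y")
    case True
    then have "card (interval x y) > 0"
      using right_mem_interval finite_interval card_gt_0_iff by blast
    then obtain k k' where n: "n = Suc k" "n' = Suc k'"
      using less.prems gr0_conv_Suc by (metis less_le_trans)
    have "moebius_fuel k x z = moebius_fuel k' x z" if z: "z \<in> interval x y - {y}" for z
    proof -
      have c: "card (interval x z) < card (interval x y)"
        using z by (rule card_interval_less)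
      show ?thesis
        by (rule less.hyps[OF c]) (use c less.prems n in linarith)+
    qed
    then show ?thesis
      using n by simp
  qed (cases n; cases n'; simp)
qed

lemma moebius_fuel_interval_sum:
  assumes "le x y"
  shows "(\<Sum>z\<in>interval x y. moebius_fuel (card A) x z) = (if x = y then 1 else 0)"
proof -
  have bound: "card (interval x y) \<le> card A"
    by (rule card_mono[OF finite_carrier]) (auto simp: interval_def)
  moreover have "card (interval x y) > 0"
    using assms right_mem_interval finite_interval card_gt_0_iff by blast
  ultimately obtain k where k: "card A = Suc k"
    using not0_implies_Suc by fastforce
  have below: "moebius_fuel k x z = moebius_fuel (card A) x z" if z: "z \<in> interval x y - {y}" for z
  proof -
    have "card (interval x z) < card (interval x y)"
      using z by (rule card_interval_less)
    then show ?thesis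
      using bound k by (intro moebius_fuel_stable) linarith+
  qed
  show ?thesis
  proof (cases "x = y")
    case True
    then show ?thesis
      using assms le_in_carrier k by (simp add: interval_refl)
  next
    case False
    have "moebius_fuel (card A) x y = - (\<Sum>z\<in>interval x y - {y}. moebius_fuel k x z)"
      using False assms k by simp
    also have "\<dots> = - (\<Sum>z\<in>interval x y - {y}. moebius_fuel (card A) x z)"
      using below by simp
    finally show ?thesis
      using False by (simp add: sum.remove[OF finite_interval right_mem_interval[OF assms]])
  qed
qed

lemma moebius_characterization:
  "(\<forall>x y. moebius le A x y \<noteq> 0 \<longrightarrow> x \<in> A \<and> y \<in> A \<and> le x y) \<and>
   (\<forall>x\<in>A. \<forall>y\<in>A. le x y \<longrightarrow>
      (\<Sum>z\<in>{z\<in>A. le x z \<and> le z y}. moebius le A x z) = (if x = y then 1 else 0))"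
proof -
  let ?P = "\<lambda>f :: 'a \<Rightarrow> 'a \<Rightarrow> int. (\<forall>x y. f x y \<noteq> 0 \<longrightarrow> x \<in> A \<and> y \<in> A \<and> le x y) \<and>
     (\<forall>x\<in>A. \<forall>y\<in>A. le x y \<longrightarrow>
        (\<Sum>z\<in>{z\<in>A. le x z \<and> le z y}. f x z) = (if x = y then 1 else 0))"
  have "\<exists>!f. ?P f"
  proof (rule ex1I)
    have "moebius_fuel (card A) x y = 0" if "\<not> le x y" for x y
      using that by (cases "card A") simp_all
    then show "?P (moebius_fuel (card A))"
      using moebius_fuel_interval_sum le_in_carrier unfolding interval_def by blast
    fix f
    assume f: "?P f"
    show "f = moebius_fuel (card A)"
    proof (intro ext)
      fix x y
      show "f x y = moebius_fuel (card A) x y"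
      proof (cases "le x y")
        case True
        have "(\<Sum>z\<in>interval x w. f x z) = (\<Sum>z\<in>interval x w. moebius_fuel (card A) x z)"
          if "le x w" for w
          using f moebius_fuel_interval_sum[OF that] le_in_carrier[OF that] that
          unfolding interval_def by simp
        then show ?thesis
          using True by (rule eq_if_interval_sums_eq)
      next
        case False
        then have "f x y = 0"
          using f by meson
        moreover have "moebius_fuel (card A) x y = 0"
          using False by (cases "card A") simp_all
        ultimately show ?thesis
          by simp
      qed
    qed
  qed
  then have "?P (THE f. ?P f)"
    by (rule theI')
  then show ?thesis
    unfolding moebius_def .
qed

lemma moebius_interval_sum:
  assumes "le x y"
  shows "(\<Sum>z\<in>interval x y. moebius le A x z) = (if x = y then 1 else 0)"
  unfolding interval_def
  using assms le_in_carrier[OF assms] by (intro moebius_characterization[THEN conjunct2, rule_format]) auto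

lemma eq_moebius_if_interval_sums:
  assumes "\<And>w. le x w \<Longrightarrow> (\<Sum>z\<in>interval x w. f z) = (if x = w then 1 else 0)" and "le x w"
  shows "f w = moebius le A x w"
proof (rule eq_if_interval_sums_eq[OF _ assms(2)])
  fix v
  assume "le x v"
  then show "(\<Sum>z\<in>interval x v. f z) = (\<Sum>z\<in>interval x v. moebius le A x z)"
    by (simp add: assms(1) moebius_interval_sum)
qed

end

lemma moebius_product_embedding:
  assumes P: "finite_poset le A" and P1: "finite_poset le1 A1" and P2: "finite_poset le2 A2"
    and inj: "inj_on (case_prod f) (A1 \<times> A2)"
    and order: "\<And>a b a' b'. \<lbrakk>a \<in> A1; b \<in> A2; a' \<in> A1; b' \<in> A2\<rbrakk> \<Longrightarrow>
      le (f a b) (f a' b') \<longleftrightarrow> le1 a a' \<and> le2 b b'"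
    and upward: "\<And>w. le (f x1 x2) w \<Longrightarrow> \<exists>a b. le1 x1 a \<and> le2 x2 b \<and> w = f a b"
    and a: "le1 x1 a" and b: "le2 x2 b"
  shows "moebius le A (f x1 x2) (f a b) = moebius le1 A1 x1 a * moebius le2 A2 x2 b"
proof -
  interpret finite_poset le A by (fact P)
  interpret P1: finite_poset le1 A1 by (fact P1)
  interpret P2: finite_poset le2 A2 by (fact P2)
  have x: "x1 \<in> A1" "x2 \<in> A2"
    using P1.le_in_carrier[OF a] P2.le_in_carrier[OF b] by auto
  have interval_image: "interval (f x1 x2) (f a' b') = case_prod f ` (P1.interval x1 a' \<times> P2.interval x2 b')"
    if "le1 x1 a'" "le2 x2 b'" for a' b'
  proof (intro equalityI subsetI)
    fix z
    assume z: "z \<in> interval (f x1 x2) (f a' b')"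
    then obtain c d where cd: "le1 x1 c" "le2 x2 d" "z = f c d"
      using upward unfolding interval_def by blast
    then have "le1 c a' \<and> le2 d b'"
      using z order P1.le_in_carrier P2.le_in_carrier that unfolding interval_def by blast
    then show "z \<in> case_prod f ` (P1.interval x1 a' \<times> P2.interval x2 b')"
      using cd P1.le_in_carrier P2.le_in_carrier unfolding P1.interval_def P2.interval_def by blast
  next
    fix z
    assume "z \<in> case_prod f ` (P1.interval x1 a' \<times> P2.interval x2 b')"
    then obtain c d where cd: "z = f c d" "c \<in> A1" "d \<in> A2" "le1 x1 c" "le1 c a'" "le2 x2 d" "le2 d b'"
      unfolding P1.interval_def P2.interval_def by auto
    then have "le (f x1 x2) z" "le z (f a' b')"
      using order x P1.le_in_carrier[OF that(1)] P2.le_in_carrier[OF that(2)] by auto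
    then show "z \<in> interval (f x1 x2) (f a' b')"
      using le_in_carrier unfolding interval_def by blast
  qed
  define g where "g = inv_into (A1 \<times> A2) (case_prod f)"
  have g: "g (f c d) = (c, d)" if "c \<in> A1" "d \<in> A2" for c d
    using inv_into_f_f[OF inj, of "(c, d)"] that unfolding g_def by simp
  let ?h = "\<lambda>w. moebius le1 A1 x1 (fst (g w)) * moebius le2 A2 x2 (snd (g w))"
  have "?h w = moebius le A (f x1 x2) w" if "le (f x1 x2) w" for w
  proof (rule eq_moebius_if_interval_sums[OF _ that])
    fix w
    assume "le (f x1 x2) w"
    then obtain a' b' where ab': "le1 x1 a'" "le2 x2 b'" "w = f a' b'"
      using upward by blast
    have sub: "P1.interval x1 a' \<times> P2.interval x2 b' \<subseteq> A1 \<times> A2"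
      unfolding P1.interval_def P2.interval_def by blast
    have "(\<Sum>z\<in>interval (f x1 x2) w. ?h z) = (\<Sum>(c, d)\<in>P1.interval x1 a' \<times> P2.interval x2 b'. ?h (f c d))"
      unfolding ab'(3) interval_image[OF ab'(1,2)]
      by (subst sum.reindex[OF inj_on_subset[OF inj sub]]) (simp add: case_prod_beta')
    also have "\<dots> = (\<Sum>(c, d)\<in>P1.interval x1 a' \<times> P2.interval x2 b'. moebius le1 A1 x1 c * moebius le2 A2 x2 d)"
      using sub g by (intro sum.cong) auto
    also have "\<dots> = (\<Sum>c\<in>P1.interval x1 a'. moebius le1 A1 x1 c) * (\<Sum>d\<in>P2.interval x2 b'. moebius le2 A2 x2 d)"
      by (simp add: sum_product sum.cartesian_product)
    also have "\<dots> = (if x1 = a' then 1 else 0) * (if x2 = b' then 1 else 0)"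
      using P1.moebius_interval_sum[OF ab'(1)] P2.moebius_interval_sum[OF ab'(2)] by simp
    also have "\<dots> = (if f x1 x2 = w then 1 else 0)"
      using inj_onD[OF inj, of "(x1, x2)" "(a', b')"] x ab' P1.le_in_carrier P2.le_in_carrier by auto
    finally show "(\<Sum>z\<in>interval (f x1 x2) w. ?h z) = (if f x1 x2 = w then 1 else 0)" .
  qed
  moreover have "le (f x1 x2) (f a b)"
    using order x a b P1.le_in_carrier P2.le_in_carrier by blast
  ultimately show ?thesis
    using g P1.le_in_carrier[OF a] P2.le_in_carrier[OF b] by fastforce
qed

section \<open>Set compositions\<close>

text \<open>Set compositions are lists of pairwise disjoint blocks, empty blocks allowed, so that
  intersecting two compositions blockwise again yields one.\<close>
fun disjoint_blocks :: "'a set list \<Rightarrow> bool" where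
  "disjoint_blocks [] \<longleftrightarrow> True"
| "disjoint_blocks (S # Ss) \<longleftrightarrow> S \<inter> \<Union>(set Ss) = {} \<and> disjoint_blocks Ss"

lemma disjoint_blocks_append:
  "disjoint_blocks (Ss @ Ts) \<longleftrightarrow> disjoint_blocks Ss \<and> disjoint_blocks Ts \<and> \<Union>(set Ss) \<inter> \<Union>(set Ts) = {}"
  by (induction Ss) auto

lemma disjoint_blocks_map_Int: "disjoint_blocks Ss \<Longrightarrow> disjoint_blocks (map ((\<inter>) A) Ss)"
  by (induction Ss) auto

lemma disjoint_blocks_filter: "disjoint_blocks Ss \<Longrightarrow> disjoint_blocks (filter P Ss)"
  by (induction Ss) auto

lemma Union_set_map_Int [simp]: "\<Union>(set (map ((\<inter>) A) Ss)) = A \<inter> \<Union>(set Ss)"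
  by auto

lemma disjoint_blocks_iff_distinct_disjoint:
  assumes "{} \<notin> set Ss"
  shows "disjoint_blocks Ss \<longleftrightarrow> distinct Ss \<and> disjoint (set Ss)"
  using assms
proof (induction Ss)
  case (Cons S Ss)
  then show ?case
    by (auto simp: disjoint_def pairwise_insert disjnt_def)
qed simp

definition blocks_meet :: "'a set list \<Rightarrow> 'a set list \<Rightarrow> 'a set list" where
  "blocks_meet P Q = concat (map (\<lambda>S. map ((\<inter>) S) Q) P)"

lemma blocks_meet_Nil [simp]: "blocks_meet [] Q = []"
  by (simp add: blocks_meet_def)

lemma blocks_meet_Cons [simp]: "blocks_meet (S # P) Q = map ((\<inter>) S) Q @ blocks_meet P Q"
  by (simp add: blocks_meet_def)

lemma Union_blocks_meet [simp]: "\<Union>(set (blocks_meet P Q)) = \<Union>(set P) \<inter> \<Union>(set Q)"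
  by (auto simp: blocks_meet_def)

lemma disjoint_blocks_meet: "disjoint_blocks P \<Longrightarrow> disjoint_blocks Q \<Longrightarrow> disjoint_blocks (blocks_meet P Q)"
  by (induction P) (auto simp: disjoint_blocks_append disjoint_blocks_map_Int)

lemma blocks_meet_subset: "B \<in> set (blocks_meet P Q) \<Longrightarrow> \<exists>S\<in>set P. B \<subseteq> S"
  by (auto simp: blocks_meet_def)

lemma blocks_meet_restrict: "\<forall>S\<in>set P. S \<subseteq> U \<Longrightarrow> blocks_meet P (map ((\<inter>) U) Q) = blocks_meet P Q"
  by (induction P) auto

lemma nonempty_blocks_map_Int_subset:
  assumes "S \<in> set P" "B \<subseteq> S" "disjoint_blocks P"
  shows "filter (\<lambda>X. X \<noteq> {}) (map ((\<inter>) B) P) = filter (\<lambda>X. X \<noteq> {}) [B]"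
  using assms
proof (induction P)
  case (Cons T P)
  show ?case
  proof (cases "T = S")
    case True
    then have "filter (\<lambda>X. X \<noteq> {}) (map ((\<inter>) B) P) = []"
      using Cons.prems by (auto simp: filter_empty_conv)
    then show ?thesis
      using True Cons.prems(2) by (simp add: Int_absorb2)
  next
    case False
    then have "B \<inter> T = {}" "S \<in> set P"
      using Cons.prems by auto
    then show ?thesis
      using Cons by simp
  qed
qed simp

lemma nonempty_blocks_meet_refinement:
  assumes "disjoint_blocks P" and "\<forall>B\<in>set Q. \<exists>S\<in>set P. B \<subseteq> S"
  shows "filter (\<lambda>X. X \<noteq> {}) (blocks_meet Q P) = filter (\<lambda>X. X \<noteq> {}) Q"
  using assms(2)
proof (induction Q)
  case (Cons B Q)
  obtain S where "S \<in> set P" "B \<subseteq> S"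
    using Cons.prems by auto
  then have "filter (\<lambda>X. X \<noteq> {}) (map ((\<inter>) B) P) = filter (\<lambda>X. X \<noteq> {}) [B]"
    using assms(1) by (intro nonempty_blocks_map_Int_subset)
  then show ?case
    using Cons by simp
qed simp

section \<open>The reassembly order\<close>

text \<open>The axioms of a commutative set Hopf monoid that the argument uses: neither the
  relabelling maps of the species nor cocommutativity play a role.\<close>
locale comm_set_hopf_monoid =
  fixes H :: "'l set \<Rightarrow> 'e set"
    and m :: "'l set \<Rightarrow> 'l set \<Rightarrow> 'e \<Rightarrow> 'e \<Rightarrow> 'e"
    and D :: "'l set \<Rightarrow> 'l set \<Rightarrow> 'e \<Rightarrow> 'e \<times> 'e"
  assumes finite_H: "finite I \<Longrightarrow> finite (H I)"
    and H_empty: "H {} = {unit_elem H}"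
    and m_closed: "\<lbrakk>finite S; finite T; S \<inter> T = {}; x \<in> H S; y \<in> H T\<rbrakk> \<Longrightarrow> m S T x y \<in> H (S \<union> T)"
    and D_closed: "\<lbrakk>finite S; finite T; S \<inter> T = {}; x \<in> H (S \<union> T)\<rbrakk> \<Longrightarrow>
      fst (D S T x) \<in> H S \<and> snd (D S T x) \<in> H T"
    and m_unit: "\<lbrakk>finite I; x \<in> H I\<rbrakk> \<Longrightarrow> m {} I (unit_elem H) x = x \<and> m I {} x (unit_elem H) = x"
    and D_unit: "\<lbrakk>finite I; x \<in> H I\<rbrakk> \<Longrightarrow> D {} I x = (unit_elem H, x) \<and> D I {} x = (x, unit_elem H)"
    and m_assoc: "\<lbrakk>finite R; finite S; finite T; R \<inter> S = {}; R \<inter> T = {}; S \<inter> T = {};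
      x \<in> H R; y \<in> H S; z \<in> H T\<rbrakk> \<Longrightarrow> m (R \<union> S) T (m R S x y) z = m R (S \<union> T) x (m S T y z)"
    and D_coassoc: "\<lbrakk>finite R; finite S; finite T; R \<inter> S = {}; R \<inter> T = {}; S \<inter> T = {};
      x \<in> H (R \<union> S \<union> T)\<rbrakk> \<Longrightarrow>
      (let (a, w) = D (R \<union> S) T x; (u, v) = D R S a in (u, v, w)) =
      (let (u, b) = D R (S \<union> T) x; (v, w) = D S T b in (u, v, w))"
    and compatible: "\<lbrakk>finite S1; finite S2; finite T1; finite T2; S1 \<inter> S2 = {}; T1 \<inter> T2 = {};
      S1 \<union> S2 = T1 \<union> T2; x \<in> H S1; y \<in> H S2\<rbrakk> \<Longrightarrow>
      D T1 T2 (m S1 S2 x y) =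
        (m (S1 \<inter> T1) (S2 \<inter> T1) (fst (D (S1 \<inter> T1) (S1 \<inter> T2) x)) (fst (D (S2 \<inter> T1) (S2 \<inter> T2) y)),
         m (S1 \<inter> T2) (S2 \<inter> T2) (snd (D (S1 \<inter> T1) (S1 \<inter> T2) x)) (snd (D (S2 \<inter> T1) (S2 \<inter> T2) y)))"
    and m_commute: "\<lbrakk>finite S; finite T; S \<inter> T = {}; x \<in> H S; y \<in> H T\<rbrakk> \<Longrightarrow> m S T x y = m T S y x"

lemma comm_set_hopf_monoidI:
  assumes "set_hopf_monoid H rl m D" and "commutative_shm H m"
  shows "comm_set_hopf_monoid H m D"
proof -
  have "H {} = {unit_elem H}"
    using assms(1) unfolding set_hopf_monoid_def set_species_def unit_elem_def by force
  with assms show ?thesis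
    unfolding comm_set_hopf_monoid_def set_hopf_monoid_def set_species_def commutative_shm_def Let_def
    by meson
qed

context comm_set_hopf_monoid
begin

lemma D_coassoc_components:
  assumes "finite R" "finite S" "finite T" "R \<inter> S = {}" "R \<inter> T = {}" "S \<inter> T = {}"
    and "x \<in> H (R \<union> S \<union> T)"
  shows "fst (D R S (fst (D (R \<union> S) T x))) = fst (D R (S \<union> T) x)"
    and "snd (D R S (fst (D (R \<union> S) T x))) = fst (D S T (snd (D R (S \<union> T) x)))"
    and "snd (D (R \<union> S) T x) = snd (D S T (snd (D R (S \<union> T) x)))"
  using D_coassoc[OF assms] by (simp_all add: Let_def case_prod_beta prod_eq_iff)

lemma D_m:
  assumes "finite S" "finite T" "S \<inter> T = {}" "x \<in> H S" "y \<in> H T"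
  shows "D S T (m S T x y) = (x, y)"
proof -
  have "S \<inter> S = S" "T \<inter> S = {}" "T \<inter> T = T" "S \<inter> T = {}"
    using assms(3) by auto
  then show ?thesis
    using compatible[of S T S T x y] assms D_unit m_unit by simp
qed

lemma m_inj:
  assumes "finite S" "finite T" "S \<inter> T = {}" "x \<in> H S" "y \<in> H T" "x' \<in> H S" "y' \<in> H T"
    and "m S T x y = m S T x' y'"
  shows "x = x'" and "y = y'"
proof -
  have "(x, y) = (x', y')"
    using D_m[OF assms(1-5)] D_m[OF assms(1-3,6,7)] unfolding assms(8) by (rule trans[OF sym])
  then show "x = x'" "y = y'"
    by simp_all
qed

lemma m_interchange:
  assumes fin: "finite P" "finite Q" "finite R" "finite W"
    and disj: "P \<inter> Q = {}" "P \<inter> R = {}" "P \<inter> W = {}" "Q \<inter> R = {}" "Q \<inter> W = {}" "R \<inter> W = {}"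
    and mem: "a \<in> H P" "b \<in> H Q" "c \<in> H R" "d \<in> H W"
  shows "m (P \<union> Q) (R \<union> W) (m P Q a b) (m R W c d) = m (P \<union> R) (Q \<union> W) (m P R a c) (m Q W b d)"
proof -
  have cd: "m R W c d \<in> H (R \<union> W)" and bd: "m Q W b d \<in> H (Q \<union> W)"
    using m_closed fin disj mem by auto
  have "m (P \<union> Q) (R \<union> W) (m P Q a b) (m R W c d) = m P (Q \<union> (R \<union> W)) a (m Q (R \<union> W) b (m R W c d))"
    by (rule m_assoc) (use fin disj mem cd in auto)
  also have "m Q (R \<union> W) b (m R W c d) = m (Q \<union> R) W (m Q R b c) d"
    by (rule m_assoc[symmetric]) (use fin disj mem in auto)
  also have "m Q R b c = m R Q c b"
    by (rule m_commute) (use fin disj mem in auto)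
  also have "Q \<union> R = R \<union> Q"
    by auto
  also have "Q \<union> (R \<union> W) = R \<union> (Q \<union> W)"
    by auto
  also have "m (R \<union> Q) W (m R Q c b) d = m R (Q \<union> W) c (m Q W b d)"
    by (rule m_assoc) (use fin disj mem in auto)
  also have "m P (R \<union> (Q \<union> W)) a (m R (Q \<union> W) c (m Q W b d)) = m (P \<union> R) (Q \<union> W) (m P R a c) (m Q W b d)"
    by (rule m_assoc[symmetric]) (use fin disj mem bd in auto)
  finally show ?thesis .
qed

definition reassemble :: "'l set list \<Rightarrow> 'e \<Rightarrow> 'e" where
  "reassemble Ss x = mult_it m (unit_elem H) Ss (comult_it D Ss x)"

lemma reassemble_Nil [simp]: "reassemble [] x = unit_elem H"
  by (simp add: reassemble_def)

lemma reassemble_Cons: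
  "reassemble (S # Ss) x =
     m S (\<Union>(set Ss)) (fst (D S (\<Union>(set Ss)) x)) (reassemble Ss (snd (D S (\<Union>(set Ss)) x)))"
  by (simp add: reassemble_def)

lemma reassemble_closed:
  assumes "disjoint_blocks Ss" "finite (\<Union>(set Ss))" "x \<in> H (\<Union>(set Ss))"
  shows "reassemble Ss x \<in> H (\<Union>(set Ss))"
  using assms
proof (induction Ss arbitrary: x)
  case (Cons S Ss)
  let ?U = "\<Union>(set Ss)"
  have fin: "finite S" "finite ?U" "S \<inter> ?U = {}"
    using Cons.prems by auto
  then have "fst (D S ?U x) \<in> H S" "snd (D S ?U x) \<in> H ?U"
    using D_closed Cons.prems(3) by auto
  then show ?case
    using Cons m_closed fin by (simp add: reassemble_Cons)
qed (simp add: H_empty)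

lemma reassemble_single: "finite I \<Longrightarrow> x \<in> H I \<Longrightarrow> reassemble [I] x = x"
  using D_unit m_unit by (simp add: reassemble_Cons)

lemma reassemble_nonempty_blocks:
  assumes "disjoint_blocks Ss" "finite (\<Union>(set Ss))" "x \<in> H (\<Union>(set Ss))"
  shows "reassemble (filter (\<lambda>S. S \<noteq> {}) Ss) x = reassemble Ss x"
  using assms
proof (induction Ss arbitrary: x)
  case (Cons S Ss)
  let ?U = "\<Union>(set Ss)"
  have fin: "finite S" "finite ?U" "S \<inter> ?U = {}"
    using Cons.prems by auto
  show ?case
  proof (cases "S = {}")
    case True
    then have x: "x \<in> H ?U"
      using Cons.prems(3) by simp
    then have "reassemble (S # Ss) x = reassemble Ss x"
      using True D_unit m_unit reassemble_closed fin Cons.prems(1) by (simp add: reassemble_Cons)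
    then show ?thesis
      using True Cons.IH[OF _ fin(2) x] Cons.prems(1) by simp
  next
    case False
    have x: "snd (D S ?U x) \<in> H ?U"
      using D_closed fin Cons.prems(3) by auto
    have U: "\<Union>(set (filter (\<lambda>S. S \<noteq> {}) Ss)) = ?U"
      by auto
    have "reassemble (filter (\<lambda>S. S \<noteq> {}) (S # Ss)) x = reassemble (S # filter (\<lambda>S. S \<noteq> {}) Ss) x"
      using False by simp
    also have "\<dots> = m S ?U (fst (D S ?U x)) (reassemble (filter (\<lambda>S. S \<noteq> {}) Ss) (snd (D S ?U x)))"
      unfolding reassemble_Cons U ..
    also have "\<dots> = reassemble (S # Ss) x"
      using Cons.IH[OF _ fin(2) x] Cons.prems(1) by (simp add: reassemble_Cons)
    finally show ?thesis .
  qed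
qed simp

lemma reassemble_append:
  assumes "disjoint_blocks (Ss @ Ts)" "\<Union>(set Ss) = A" "\<Union>(set Ts) = B" "finite A" "finite B"
    and "x \<in> H (A \<union> B)"
  shows "reassemble (Ss @ Ts) x = m A B (reassemble Ss (fst (D A B x))) (reassemble Ts (snd (D A B x)))"
  using assms
proof (induction Ss arbitrary: A x)
  case Nil
  then have "A = {}" "x \<in> H B"
    by simp_all
  moreover have "reassemble Ts x \<in> H B"
    using reassemble_closed[of Ts x] Nil \<open>x \<in> H B\<close> by simp
  ultimately show ?case
    using Nil(5) D_unit m_unit by simp
next
  case (Cons S Ss)
  let ?A' = "\<Union>(set Ss)"
  let ?xS = "fst (D S (?A' \<union> B) x)" and ?x' = "snd (D S (?A' \<union> B) x)"
  have A: "A = S \<union> ?A'"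
    using Cons.prems by simp
  have disj: "disjoint_blocks (Ss @ Ts)" "S \<inter> ?A' = {}" "S \<inter> B = {}" "?A' \<inter> B = {}"
    using Cons.prems by (auto simp: disjoint_blocks_append)
  have fin: "finite S" "finite ?A'"
    using Cons.prems by auto
  have x: "x \<in> H (S \<union> ?A' \<union> B)"
    using Cons.prems A by simp
  have x': "?xS \<in> H S" "?x' \<in> H (?A' \<union> B)"
    using D_closed[of S "?A' \<union> B" x] x disj fin Cons.prems(5) by (auto simp: Un_assoc)
  have x'': "fst (D ?A' B ?x') \<in> H ?A'" "snd (D ?A' B ?x') \<in> H B"
    using D_closed[OF fin(2) Cons.prems(5) disj(4) x'(2)] by auto
  have "reassemble ((S # Ss) @ Ts) x = m S (?A' \<union> B) ?xS (reassemble (Ss @ Ts) ?x')"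
    using Cons.prems(3) by (simp add: reassemble_Cons)
  also have "\<dots> = m S (?A' \<union> B) ?xS (m ?A' B (reassemble Ss (fst (D ?A' B ?x'))) (reassemble Ts (snd (D ?A' B ?x'))))"
    using Cons.IH[OF disj(1) refl Cons.prems(3) fin(2) Cons.prems(5) x'(2)] by simp
  also have "\<dots> = m (S \<union> ?A') B (m S ?A' ?xS (reassemble Ss (fst (D ?A' B ?x')))) (reassemble Ts (snd (D ?A' B ?x')))"
    using reassemble_closed disj fin Cons.prems x' x''
    by (intro m_assoc[symmetric]) (auto simp: disjoint_blocks_append)
  also have "\<dots> = m A B (reassemble (S # Ss) (fst (D A B x))) (reassemble Ts (snd (D A B x)))"
    using A D_coassoc_components[OF fin Cons.prems(5) disj(2-4) x] by (simp add: reassemble_Cons)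
  finally show ?case .
qed

lemma reassemble_m:
  assumes "disjoint_blocks Ss" "\<Union>(set Ss) = A \<union> B" "finite A" "finite B" "A \<inter> B = {}"
    and "x \<in> H A" "y \<in> H B"
  shows "reassemble Ss (m A B x y) = m A B (reassemble (map ((\<inter>) A) Ss) x) (reassemble (map ((\<inter>) B) Ss) y)"
  using assms
proof (induction Ss arbitrary: A B x y)
  case Nil
  then have "A = {}" "B = {}" "x = unit_elem H" "y = unit_elem H"
    using H_empty by auto
  then show ?case
    using m_unit[of "{}"] H_empty by simp
next
  case (Cons S Ss)
  let ?U = "\<Union>(set Ss)"
  let ?xS = "fst (D (A \<inter> S) (A \<inter> ?U) x)" and ?xU = "snd (D (A \<inter> S) (A \<inter> ?U) x)"
  let ?yS = "fst (D (B \<inter> S) (B \<inter> ?U) y)" and ?yU = "snd (D (B \<inter> S) (B \<inter> ?U) y)"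
  let ?RA = "reassemble (map ((\<inter>) A) Ss) ?xU" and ?RB = "reassemble (map ((\<inter>) B) Ss) ?yU"
  have SU: "S \<inter> ?U = {}" "S \<union> ?U = A \<union> B" "disjoint_blocks Ss"
    using Cons.prems by auto
  have fin: "finite S" "finite ?U" "finite (A \<inter> S)" "finite (A \<inter> ?U)" "finite (B \<inter> S)" "finite (B \<inter> ?U)"
    using Cons.prems SU(2) by (metis finite_Int finite_Un)+
  have A: "(A \<inter> S) \<union> (A \<inter> ?U) = A" and B: "(B \<inter> S) \<union> (B \<inter> ?U) = B"
    using SU by blast+
  have x: "?xS \<in> H (A \<inter> S)" "?xU \<in> H (A \<inter> ?U)"
    using D_closed[of "A \<inter> S" "A \<inter> ?U" x] fin SU A Cons.prems(6) by auto
  have y: "?yS \<in> H (B \<inter> S)" "?yU \<in> H (B \<inter> ?U)"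
    using D_closed[of "B \<inter> S" "B \<inter> ?U" y] fin SU B Cons.prems(7) by auto
  have R: "?RA \<in> H (A \<inter> ?U)" "?RB \<in> H (B \<inter> ?U)"
    using reassemble_closed[of "map ((\<inter>) A) Ss" ?xU] reassemble_closed[of "map ((\<inter>) B) Ss" ?yU]
      disjoint_blocks_map_Int[OF SU(3)] fin x y by simp_all
  have "reassemble (S # Ss) (m A B x y) = m S ?U (m (A \<inter> S) (B \<inter> S) ?xS ?yS) (reassemble Ss (m (A \<inter> ?U) (B \<inter> ?U) ?xU ?yU))"
    using compatible[of A B S ?U x y] Cons.prems fin SU by (simp add: reassemble_Cons)
  also have "reassemble Ss (m (A \<inter> ?U) (B \<inter> ?U) ?xU ?yU) = m (A \<inter> ?U) (B \<inter> ?U) ?RA ?RB"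
  proof -
    have restrict: "map ((\<inter>) (A \<inter> ?U)) Ss = map ((\<inter>) A) Ss" "map ((\<inter>) (B \<inter> ?U)) Ss = map ((\<inter>) B) Ss"
      by auto
    have "reassemble Ss (m (A \<inter> ?U) (B \<inter> ?U) ?xU ?yU) =
      m (A \<inter> ?U) (B \<inter> ?U) (reassemble (map ((\<inter>) (A \<inter> ?U)) Ss) ?xU) (reassemble (map ((\<inter>) (B \<inter> ?U)) Ss) ?yU)"
      by (rule Cons.IH) (use Cons.prems fin x y SU in auto)
    then show ?thesis
      unfolding restrict .
  qed
  also have "m S ?U (m (A \<inter> S) (B \<inter> S) ?xS ?yS) (m (A \<inter> ?U) (B \<inter> ?U) ?RA ?RB)
      = m A B (m (A \<inter> S) (A \<inter> ?U) ?xS ?RA) (m (B \<inter> S) (B \<inter> ?U) ?yS ?RB)"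
  proof -
    have "(A \<inter> S) \<inter> (B \<inter> S) = {}" "(A \<inter> S) \<inter> (A \<inter> ?U) = {}" "(A \<inter> S) \<inter> (B \<inter> ?U) = {}"
      "(B \<inter> S) \<inter> (A \<inter> ?U) = {}" "(B \<inter> S) \<inter> (B \<inter> ?U) = {}" "(A \<inter> ?U) \<inter> (B \<inter> ?U) = {}"
      using SU(1) Cons.prems(5) by blast+
    note interchange = m_interchange[OF fin(3,5,4,6) this x(1) y(1) R]
    have "(A \<inter> S) \<union> (B \<inter> S) = S" "(A \<inter> ?U) \<union> (B \<inter> ?U) = ?U"
      using SU by blast+
    with A B show ?thesis
      using interchange by simp
  qed
  also have "\<dots> = m A B (reassemble (map ((\<inter>) A) (S # Ss)) x) (reassemble (map ((\<inter>) B) (S # Ss)) y)"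
    by (simp add: reassemble_Cons)
  finally show ?case .
qed

lemma reassemble_reassemble:
  assumes "disjoint_blocks P" "disjoint_blocks Q" "\<Union>(set P) = I" "\<Union>(set Q) = I" "finite I" "x \<in> H I"
  shows "reassemble Q (reassemble P x) = reassemble (blocks_meet P Q) x"
  using assms
proof (induction P arbitrary: Q I x)
  case Nil
  then have "filter (\<lambda>S. S \<noteq> {}) Q = []"
    by (auto simp: filter_empty_conv)
  then show ?case
    using reassemble_nonempty_blocks[of Q "unit_elem H"] Nil H_empty by simp
next
  case (Cons S P)
  let ?U = "\<Union>(set P)"
  let ?xS = "fst (D S ?U x)" and ?xU = "snd (D S ?U x)"
  have I: "I = S \<union> ?U" "S \<inter> ?U = {}" "finite S" "finite ?U"
    using Cons.prems by auto
  have x: "?xS \<in> H S" "?xU \<in> H ?U"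
    using D_closed[of S ?U x] I Cons.prems by auto
  have "reassemble Q (reassemble (S # P) x) = reassemble Q (m S ?U ?xS (reassemble P ?xU))"
    by (simp add: reassemble_Cons)
  also have "\<dots> = m S ?U (reassemble (map ((\<inter>) S) Q) ?xS) (reassemble (map ((\<inter>) ?U) Q) (reassemble P ?xU))"
    using reassemble_m[of Q S ?U] reassemble_closed[of P ?xU] Cons.prems I x by auto
  also have "reassemble (map ((\<inter>) ?U) Q) (reassemble P ?xU) = reassemble (blocks_meet P (map ((\<inter>) ?U) Q)) ?xU"
    using Cons.IH[of "map ((\<inter>) ?U) Q" ?U ?xU] disjoint_blocks_map_Int[of Q ?U] Cons.prems I x by auto
  also have "blocks_meet P (map ((\<inter>) ?U) Q) = blocks_meet P Q"
    by (rule blocks_meet_restrict) auto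
  also have "m S ?U (reassemble (map ((\<inter>) S) Q) ?xS) (reassemble (blocks_meet P Q) ?xU)
      = reassemble (map ((\<inter>) S) Q @ blocks_meet P Q) x"
    using reassemble_append[of "map ((\<inter>) S) Q" "blocks_meet P Q" S ?U x]
      disjoint_blocks_map_Int[of Q S] disjoint_blocks_meet[of P Q] Cons.prems I
    by (auto simp: disjoint_blocks_append)
  finally show ?case
    by simp
qed

lemma reassemble_refinement:
  assumes "disjoint_blocks P" "disjoint_blocks Q" "\<Union>(set P) = I" "\<Union>(set Q) = I" "finite I" "x \<in> H I"
    and "\<forall>B\<in>set Q. \<exists>S\<in>set P. B \<subseteq> S"
  shows "reassemble P (reassemble Q x) = reassemble Q x"
proof -
  have "reassemble P (reassemble Q x) = reassemble (blocks_meet Q P) x"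
    using reassemble_reassemble assms(1-6) by blast
  also have "\<dots> = reassemble (filter (\<lambda>S. S \<noteq> {}) (blocks_meet Q P)) x"
    using reassemble_nonempty_blocks[of "blocks_meet Q P" x] disjoint_blocks_meet[OF assms(2,1)] assms(3-6) by simp
  also have "\<dots> = reassemble (filter (\<lambda>S. S \<noteq> {}) Q) x"
    using nonempty_blocks_meet_refinement[OF assms(1,7)] by simp
  also have "\<dots> = reassemble Q x"
    using reassemble_nonempty_blocks[of Q x] assms(2,4-6) by simp
  finally show ?thesis .
qed

abbreviation le_r :: "'l set \<Rightarrow> 'e \<Rightarrow> 'e \<Rightarrow> bool" where
  "le_r I \<equiv> reassembly_le H m D I"

lemma reassembly_le_iff:
  assumes "finite I"
  shows "le_r I x y \<longleftrightarrow> x \<in> H I \<and> (\<exists>Ss. disjoint_blocks Ss \<and> \<Union>(set Ss) = I \<and> y = reassemble Ss x)"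
proof
  assume "le_r I x y"
  then obtain Ss where Ss: "x \<in> H I" "distinct Ss" "partition_on I (set Ss)" "y = reassemble Ss x"
    unfolding reassembly_le_def reassemble_def by blast
  then have "disjoint_blocks Ss"
    using disjoint_blocks_iff_distinct_disjoint partition_onD2 partition_onD3 by blast
  then show "x \<in> H I \<and> (\<exists>Ss. disjoint_blocks Ss \<and> \<Union>(set Ss) = I \<and> y = reassemble Ss x)"
    using Ss partition_onD1 by blast
next
  assume "x \<in> H I \<and> (\<exists>Ss. disjoint_blocks Ss \<and> \<Union>(set Ss) = I \<and> y = reassemble Ss x)"
  then obtain Ss where Ss: "x \<in> H I" "disjoint_blocks Ss" "\<Union>(set Ss) = I" "y = reassemble Ss x"
    by blast
  let ?Ss = "filter (\<lambda>S. S \<noteq> {}) Ss"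
  have "distinct ?Ss" "disjoint (set ?Ss)"
    using disjoint_blocks_iff_distinct_disjoint[of ?Ss] disjoint_blocks_filter[OF Ss(2)] by auto
  moreover have "\<Union>(set ?Ss) = I"
    using Ss(3) by auto
  ultimately have "distinct ?Ss" "partition_on I (set ?Ss)"
    unfolding partition_on_def by simp_all
  moreover have "y = reassemble ?Ss x"
    using reassemble_nonempty_blocks Ss assms by simp
  ultimately show "le_r I x y"
    unfolding reassembly_le_def reassemble_def using Ss(1) by blast
qed

lemma reassembly_leE:
  assumes "finite I" "le_r I x y"
  obtains Ss where "x \<in> H I" "disjoint_blocks Ss" "\<Union>(set Ss) = I" "y = reassemble Ss x"
  using assms(2) unfolding reassembly_le_iff[OF assms(1)] by blast

lemma reassembly_leI:
  assumes "finite I" "x \<in> H I" "disjoint_blocks Ss" "\<Union>(set Ss) = I"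
  shows "le_r I x (reassemble Ss x)"
  unfolding reassembly_le_iff[OF assms(1)] using assms(2-4) by blast

lemma finite_poset_reassembly_le:
  assumes I: "finite I"
  shows "finite_poset (le_r I) (H I)"
proof
  show "finite (H I)"
    using finite_H I .
next
  fix x y
  assume "le_r I x y"
  then obtain Ss where "x \<in> H I" "disjoint_blocks Ss" "\<Union>(set Ss) = I" "y = reassemble Ss x"
    by (rule reassembly_leE[OF I])
  then show "x \<in> H I \<and> y \<in> H I"
    using reassemble_closed[of Ss x] I by simp
next
  fix x
  assume "x \<in> H I"
  then show "le_r I x x"
    using reassembly_leI[OF I, of x "[I]"] reassemble_single[OF I] by simp
next
  fix x y z
  assume "le_r I x y" "le_r I y z"
  obtain P where P: "x \<in> H I" "disjoint_blocks P" "\<Union>(set P) = I" "y = reassemble P x"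
    using reassembly_leE[OF I \<open>le_r I x y\<close>] .
  obtain Q where Q: "disjoint_blocks Q" "\<Union>(set Q) = I" "z = reassemble Q y"
    using reassembly_leE[OF I \<open>le_r I y z\<close>] .
  have "z = reassemble (blocks_meet P Q) x"
    using reassemble_reassemble[OF P(2) Q(1) P(3) Q(2) I P(1)] P(4) Q(3) by simp
  then show "le_r I x z"
    using reassembly_leI[OF I P(1) disjoint_blocks_meet[OF P(2) Q(1)]] P(3) Q(2) by simp
next
  fix x y
  assume "le_r I x y" "le_r I y x"
  obtain P where P: "x \<in> H I" "disjoint_blocks P" "\<Union>(set P) = I" "y = reassemble P x"
    using reassembly_leE[OF I \<open>le_r I x y\<close>] .
  obtain Q where Q: "disjoint_blocks Q" "\<Union>(set Q) = I" "x = reassemble Q y"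
    using reassembly_leE[OF I \<open>le_r I y x\<close>] .
  let ?R = "blocks_meet P Q"
  have R: "disjoint_blocks ?R" "\<Union>(set ?R) = I"
    using disjoint_blocks_meet[OF P(2) Q(1)] P(3) Q(2) by auto
  have x: "x = reassemble ?R x"
    using Q(3) unfolding P(4) reassemble_reassemble[OF P(2) Q(1) P(3) Q(2) I P(1)] .
  have "y = reassemble P (reassemble ?R x)"
    using P(4) arg_cong[OF x, of "reassemble P"] by (rule trans)
  also have "\<dots> = reassemble ?R x"
    using blocks_meet_subset by (intro reassemble_refinement[OF P(2) R(1) P(3) R(2) I P(1)]) blast
  finally have "y = reassemble ?R x" .
  with x show "x = y"
    by (rule trans[OF _ sym])
qed

lemma reassembly_le_m_cases:
  assumes "finite S" "finite T" "S \<inter> T = {}" "x \<in> H S" "y \<in> H T" "le_r (S \<union> T) (m S T x y) w"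
  obtains a b where "le_r S x a" "le_r T y b" "w = m S T a b"
proof -
  obtain Ss where Ss: "disjoint_blocks Ss" "\<Union>(set Ss) = S \<union> T" "w = reassemble Ss (m S T x y)"
    using assms reassembly_leE[of "S \<union> T"] by blast
  have "w = m S T (reassemble (map ((\<inter>) S) Ss) x) (reassemble (map ((\<inter>) T) Ss) y)"
    using reassemble_m[OF Ss(1,2) assms(1-5)] Ss(3) by simp
  moreover have "le_r S x (reassemble (map ((\<inter>) S) Ss) x)" "le_r T y (reassemble (map ((\<inter>) T) Ss) y)"
    using reassembly_leI disjoint_blocks_map_Int[OF Ss(1)] Ss(2) assms by auto
  ultimately show thesis
    using that by blast
qed

lemma reassembly_le_m:
  assumes "finite S" "finite T" "S \<inter> T = {}" "le_r S x a" "le_r T y b"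
  shows "le_r (S \<union> T) (m S T x y) (m S T a b)"
proof -
  obtain P where P: "x \<in> H S" "disjoint_blocks P" "\<Union>(set P) = S" "a = reassemble P x"
    using reassembly_leE[OF assms(1,4)] .
  obtain Q where Q: "y \<in> H T" "disjoint_blocks Q" "\<Union>(set Q) = T" "b = reassemble Q y"
    using reassembly_leE[OF assms(2,5)] .
  have xy: "m S T x y \<in> H (S \<union> T)"
    using m_closed assms(1-3) P(1) Q(1) by blast
  have PQ: "disjoint_blocks (P @ Q)" "\<Union>(set (P @ Q)) = S \<union> T"
    using P Q assms(3) by (simp_all add: disjoint_blocks_append)
  have "reassemble (P @ Q) (m S T x y) = m S T (reassemble P x) (reassemble Q y)"
    using reassemble_append[OF PQ(1) P(3) Q(3) assms(1,2) xy] D_m[OF assms(1-3) P(1) Q(1)] by simp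
  then show ?thesis
    using reassembly_leI[OF _ xy PQ] assms(1,2) P(4) Q(4) by simp
qed

lemma reassembly_le_m_iff:
  assumes "finite S" "finite T" "S \<inter> T = {}" "x \<in> H S" "y \<in> H T" "a \<in> H S" "b \<in> H T"
  shows "le_r (S \<union> T) (m S T x y) (m S T a b) \<longleftrightarrow> le_r S x a \<and> le_r T y b"
proof
  assume "le_r (S \<union> T) (m S T x y) (m S T a b)"
  then obtain a' b' where ab': "le_r S x a'" "le_r T y b'" "m S T a b = m S T a' b'"
    using reassembly_le_m_cases[OF assms(1-5)] by blast
  moreover have "a' \<in> H S" "b' \<in> H T"
    using finite_poset.le_in_carrier[OF finite_poset_reassembly_le] assms(1,2) ab'(1,2) by blast+
  ultimately show "le_r S x a \<and> le_r T y b"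
    using m_inj[OF assms(1-3,6,7)] by metis
next
  assume "le_r S x a \<and> le_r T y b"
  then show "le_r (S \<union> T) (m S T x y) (m S T a b)"
    using reassembly_le_m assms(1-3) by blast
qed

lemma moebius_m:
  assumes "finite S" "finite T" "S \<inter> T = {}" "le_r S x a" "le_r T y b"
  shows "moebius (le_r (S \<union> T)) (H (S \<union> T)) (m S T x y) (m S T a b)
       = moebius (le_r S) (H S) x a * moebius (le_r T) (H T) y b"
proof (rule moebius_product_embedding)
  show "finite_poset (le_r (S \<union> T)) (H (S \<union> T))" "finite_poset (le_r S) (H S)" "finite_poset (le_r T) (H T)"
    using finite_poset_reassembly_le assms(1,2) by simp_all
  show "inj_on (case_prod (m S T)) (H S \<times> H T)"
    using m_inj[OF assms(1-3)] by (auto intro: inj_onI)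
  show "le_r (S \<union> T) (m S T a' b') (m S T a'' b'') \<longleftrightarrow> le_r S a' a'' \<and> le_r T b' b''"
    if "a' \<in> H S" "b' \<in> H T" "a'' \<in> H S" "b'' \<in> H T" for a' b' a'' b''
    using reassembly_le_m_iff[OF assms(1-3) that] .
  have "x \<in> H S" "y \<in> H T"
    using finite_poset.le_in_carrier[OF finite_poset_reassembly_le] assms by blast+
  then show "\<exists>a b. le_r S x a \<and> le_r T y b \<and> w = m S T a b" if "le_r (S \<union> T) (m S T x y) w" for w
    using reassembly_le_m_cases[OF assms(1-3) _ _ that] by metis
qed (use assms in auto)

lemma kmult_m:
  assumes "finite S" "finite T" "S \<inter> T = {}" "a \<in> H S" "b \<in> H T"
  shows "kmult H m S T f g (m S T a b) = f a * g b"
proof -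
  have "kmult H m S T f g (m S T a b) = (\<Sum>p\<in>H S \<times> H T. if p = (a, b) then f (fst p) * g (snd p) else 0)"
    unfolding kmult_def
  proof (rule sum.cong[OF refl])
    fix p
    assume "p \<in> H S \<times> H T"
    then obtain a' b' where p: "p = (a', b')" "a' \<in> H S" "b' \<in> H T"
      by blast
    then have "m S T a' b' = m S T a b \<longleftrightarrow> p = (a, b)"
      using m_inj[OF assms(1-3) p(2,3) assms(4,5)] by auto
    then show "(case p of (a', b') \<Rightarrow> if m S T a' b' = m S T a b then f a' * g b' else 0) =
      (if p = (a, b) then f (fst p) * g (snd p) else 0)"
      using p(1) by simp
  qed
  also have "\<dots> = f a * g b"
    using finite_H assms by simp
  finally show ?thesis .
qed

lemma kmult_outside_m_image:
  assumes "w \<notin> case_prod (m S T) ` (H S \<times> H T)"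
  shows "kmult H m S T f g w = 0"
  unfolding kmult_def using assms by (intro sum.neutral) auto

lemma omega_m:
  assumes "finite S" "finite T" "S \<inter> T = {}" "x \<in> H S" "y \<in> H T"
  shows "kmult H m S T (omega H m D S x) (omega H m D T y) = omega H m D (S \<union> T) (m S T x y)"
proof
  fix w
  show "kmult H m S T (omega H m D S x) (omega H m D T y) w = omega H m D (S \<union> T) (m S T x y) w"
  proof (cases "w \<in> case_prod (m S T) ` (H S \<times> H T)")
    case True
    then obtain a b where ab: "a \<in> H S" "b \<in> H T" "w = m S T a b"
      by auto
    then have w: "w \<in> H (S \<union> T)"
      using m_closed assms(1-3) by blast
    have "kmult H m S T (omega H m D S x) (omega H m D T y) w = omega H m D S x a * omega H m D T y b"
      using kmult_m[OF assms(1-3) ab(1,2)] ab(3) by simp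
    also have "\<dots> = omega H m D (S \<union> T) (m S T x y) w"
      using ab w reassembly_le_m_iff[OF assms ab(1,2)] moebius_m[OF assms(1-3)]
      unfolding omega_def by simp
    finally show ?thesis .
  next
    case False
    have "\<not> le_r (S \<union> T) (m S T x y) w"
      using False finite_poset.le_in_carrier[OF finite_poset_reassembly_le] assms
      by (blast elim: reassembly_le_m_cases[OF assms])
    then show ?thesis
      using kmult_outside_m_image[OF False] unfolding omega_def by simp
  qed
qed

end

theorem mainTheorem12:
  fixes H :: "'l set \<Rightarrow> 'e set"
    and rl :: "('l \<Rightarrow> 'l) \<Rightarrow> 'l set \<Rightarrow> 'e \<Rightarrow> 'e"
    and m :: "'l set \<Rightarrow> 'l set \<Rightarrow> 'e \<Rightarrow> 'e \<Rightarrow> 'e"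
    and D :: "'l set \<Rightarrow> 'l set \<Rightarrow> 'e \<Rightarrow> 'e \<times> 'e"
    and S T :: "'l set" and x y :: 'e
  assumes "set_hopf_monoid H rl m D"
    and "commutative_shm H m"
    and "cocommutative_shm H D"
    and "finite S" and "finite T" and "S \<inter> T = {}"
    and "x \<in> H S" and "y \<in> H T"
  shows "kmult H m S T (omega H m D S x :: 'e \<Rightarrow> 'k::field_char_0) (omega H m D T y)
           = omega H m D (S \<union> T) (m S T x y)"
proof -
  interpret comm_set_hopf_monoid H m D
    using comm_set_hopf_monoidI assms(1,2) .
  show ?thesis
    using omega_m assms(4-8) .
qed

end
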